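(* Let $S$ be a finite set of points in the plane, let $\mathcal D$ be a set of $k$ pairwise non-opposite directions such that $S$ is in $\mathcal D$-general position, and let $T$ be a $\mathcal D$-monotone geometric spanning tree of $S$. Then the maximum degree of $T$ is at most $2k$.
   Context: A direction is a unit vector in $\mathbb{R}^2$; two directions $d,d'$ are opposite if $d'=-d$. A finite point set $S$ is in $d$-general position if no two points of $S$ lie on a common line orthogonal to $d$; $S$ is in $\mathcal D$-general position if it is in $d$-general position for every $d\in\mathcal D$. A geometric path $\langle p_1,\dots,p_r\rangle$ is $d$-monotone if its vertex set is in $d$-general position and $\langle p_1,d\rangle,\dots,\langle p_r,d\rangle$ is strictly increasing or strictly decreasing. A geometric spanning tree of $S$ is a tree with vertex set $S$ whose edges are straight segments. Given a finite set $\mathcal D$ of pairwise non-opposite directions, a geometric spanning tree $T$ of $S$ is $\mathcal D$-monotone if for every pair of vertices $u,v$ there is $d\in\mathcal D$ such that the unique path of $T$ from $u$ to $v$ is $d$-monotone. *)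

theory Defs
  imports "HOL-Analysis.Analysis"
begin

type_synonym point = "real ^ 2"

definition direction :: "point \<Rightarrow> bool" where
  "direction d \<longleftrightarrow> norm d = 1"

definition pairwise_non_opposite :: "point set \<Rightarrow> bool" where
  "pairwise_non_opposite D \<longleftrightarrow> (\<forall>d\<in>D. \<forall>d'\<in>D. d' \<noteq> - d)"

definition d_general_position :: "point \<Rightarrow> point set \<Rightarrow> bool" where
  "d_general_position d S \<longleftrightarrow> (\<forall>p\<in>S. \<forall>q\<in>S. p \<noteq> q \<longrightarrow> p \<bullet> d \<noteq> q \<bullet> d)"

definition D_general_position :: "point set \<Rightarrow> point set \<Rightarrow> bool" where
  "D_general_position D S \<longleftrightarrow> (\<forall>d\<in>D. d_general_position d S)"

definition d_monotone :: "point \<Rightarrow> point list \<Rightarrow> bool" where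
  "d_monotone d ps \<longleftrightarrow> d_general_position d (set ps) \<and>
     (sorted_wrt (<) (map (\<lambda>p. p \<bullet> d) ps) \<or> sorted_wrt (>) (map (\<lambda>p. p \<bullet> d) ps))"

text \<open>Geometric graphs: vertex set S, edges are 2-element subsets of S
  (each edge is the straight segment between its two endpoints).\<close>
definition geom_graph :: "point set \<Rightarrow> point set set \<Rightarrow> bool" where
  "geom_graph S E \<longleftrightarrow> (\<forall>e\<in>E. e \<subseteq> S \<and> card e = 2)"

definition graph_path :: "point set \<Rightarrow> point set set \<Rightarrow> point list \<Rightarrow> point \<Rightarrow> point \<Rightarrow> bool" where
  "graph_path S E ps u v \<longleftrightarrow> ps \<noteq> [] \<and> hd ps = u \<and> last ps = v \<and> distinct ps \<and>
     set ps \<subseteq> S \<and> (\<forall>i. Suc i < length ps \<longrightarrow> {ps ! i, ps ! Suc i} \<in> E)"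

definition graph_connected :: "point set \<Rightarrow> point set set \<Rightarrow> bool" where
  "graph_connected S E \<longleftrightarrow> (\<forall>u\<in>S. \<forall>v\<in>S. \<exists>ps. graph_path S E ps u v)"

definition graph_has_cycle :: "point set \<Rightarrow> point set set \<Rightarrow> bool" where
  "graph_has_cycle S E \<longleftrightarrow> (\<exists>ps. length ps \<ge> 3 \<and> graph_path S E ps (hd ps) (last ps) \<and>
     {last ps, hd ps} \<in> E)"

definition geom_spanning_tree :: "point set \<Rightarrow> point set set \<Rightarrow> bool" where
  "geom_spanning_tree S E \<longleftrightarrow> geom_graph S E \<and> graph_connected S E \<and> \<not> graph_has_cycle S E"

text \<open>D-monotone: for every pair of vertices, the (unique) tree path between them
  is d-monotone for some d in D. Since the path in a tree is unique, we quantify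
  over all paths from u to v.\<close>
definition D_monotone_tree :: "point set \<Rightarrow> point set \<Rightarrow> point set set \<Rightarrow> bool" where
  "D_monotone_tree D S E \<longleftrightarrow> (\<forall>u\<in>S. \<forall>v\<in>S. \<exists>d\<in>D. \<forall>ps. graph_path S E ps u v \<longrightarrow> d_monotone d ps)"

definition degree :: "point set set \<Rightarrow> point \<Rightarrow> nat" where
  "degree E v = card {e\<in>E. v \<in> e}"

end

theory Submission
  imports Defs
begin

text \<open>Every edge vw at a vertex v of the tree determines the sign pattern of w - v
  with respect to D, i.e. an open cell of the arrangement of the k lines through
  the origin orthogonal to the directions of D. Two edges vw, vw' in the same cell
  would make the path w v w' non-monotone in every direction of D, so the degree of
  v is at most the number of cells. Inserting a line d into an arrangement creates
  at most two new cells, since a cell meeting both sides of d contains one of the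
  two rays of d's orthogonal line; hence k lines have at most 2k cells.\<close>

definition sign_pattern :: "'a::real_inner set \<Rightarrow> 'a \<Rightarrow> 'a set" where
  "sign_pattern D x = {d \<in> D. 0 < x \<bullet> d}"

definition sign_patterns :: "'a::real_inner set \<Rightarrow> 'a set set" where
  "sign_patterns D = {sign_pattern D x | x. \<forall>d\<in>D. x \<bullet> d \<noteq> 0}"

definition rot90 :: "point \<Rightarrow> point" where
  "rot90 d = (\<chi> i. if i = 1 then - d$2 else d$1)"

lemma rot90_nth [simp]: "rot90 d $ 1 = - d$2" "rot90 d $ 2 = d$1"
  by (simp_all add: rot90_def)

lemma inner_point: "(a::point) \<bullet> b = a$1 * b$1 + a$2 * b$2"
  by (simp add: inner_vec_def sum_2)

lemma sign_pattern_empty [simp]: "sign_pattern {} x = {}"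
  by (simp add: sign_pattern_def)

lemma sign_pattern_scaleR_pos:
  "0 < c \<Longrightarrow> sign_pattern D (c *\<^sub>R x) = sign_pattern D x"
  by (auto simp: sign_pattern_def zero_less_mult_iff)

lemma finite_sign_patterns: "finite D \<Longrightarrow> finite (sign_patterns D)"
  by (rule finite_subset[of _ "Pow D"]) (auto simp: sign_patterns_def sign_pattern_def)

lemma convex_comb_same_sign:
  fixes a b t :: real
  assumes "a \<noteq> 0" "b \<noteq> 0" "0 < a \<longleftrightarrow> 0 < b" "0 \<le> t" "t \<le> 1"
  shows "(1 - t) * a + t * b \<noteq> 0 \<and> (0 < (1 - t) * a + t * b \<longleftrightarrow> 0 < a)"
  using assms by (smt (verit) mult_nonneg_nonneg mult_nonneg_nonpos mult_pos_pos mult_pos_neg)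

lemma sign_pattern_convex_comb:
  fixes x y :: "'a::real_inner"
  assumes "\<forall>d\<in>D. x \<bullet> d \<noteq> 0" "\<forall>d\<in>D. y \<bullet> d \<noteq> 0"
    and "sign_pattern D x = sign_pattern D y" and "0 \<le> t" "t \<le> 1"
  defines "z \<equiv> (1 - t) *\<^sub>R x + t *\<^sub>R y"
  shows "\<forall>d\<in>D. z \<bullet> d \<noteq> 0" and "sign_pattern D z = sign_pattern D x"
proof -
  have "z \<bullet> d \<noteq> 0 \<and> (0 < z \<bullet> d \<longleftrightarrow> 0 < x \<bullet> d)" if "d \<in> D" for d
  proof -
    have "0 < x \<bullet> d \<longleftrightarrow> 0 < y \<bullet> d"
      using assms(3) that unfolding sign_pattern_def by blast
    then show ?thesis
      using convex_comb_same_sign[of "x \<bullet> d" "y \<bullet> d" t] assms(1,2,4,5) that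
      by (simp add: z_def inner_add_left)
  qed
  then show "\<forall>d\<in>D. z \<bullet> d \<noteq> 0" and "sign_pattern D z = sign_pattern D x"
    by (auto simp: sign_pattern_def)
qed

lemma orthogonal_eq_scaleR_rot90:
  fixes z d :: point
  assumes "z \<bullet> d = 0" "d \<noteq> 0"
  shows "z = ((z \<bullet> rot90 d) / (d \<bullet> d)) *\<^sub>R rot90 d"
proof -
  have "d \<bullet> d \<noteq> 0" using assms(2) by simp
  moreover have "d$1 * z$1 + d$2 * z$2 = 0" using assms(1) by (simp add: inner_point algebra_simps)
  then have "d$1 * (d$1 * z$1 + d$2 * z$2) = 0" "d$2 * (d$1 * z$1 + d$2 * z$2) = 0" by simp_all
  ultimately show ?thesis
    by (simp add: vec_eq_iff forall_2 inner_point field_simps)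
qed

lemma sign_pattern_across_line:
  fixes x y d :: point
  assumes x: "\<forall>d'\<in>D. x \<bullet> d' \<noteq> 0" and y: "\<forall>d'\<in>D. y \<bullet> d' \<noteq> 0"
    and same: "sign_pattern D x = sign_pattern D y" and "0 < x \<bullet> d" "y \<bullet> d < 0"
  shows "sign_pattern D x \<in> {sign_pattern D (rot90 d), sign_pattern D (- rot90 d)}"
proof -
  define t where "t = (x \<bullet> d) / (x \<bullet> d - y \<bullet> d)"
  define z where "z = (1 - t) *\<^sub>R x + t *\<^sub>R y"
  have "0 \<le> t" "t \<le> 1" using assms(4,5) by (auto simp: t_def field_simps)
  then have z: "\<forall>d'\<in>D. z \<bullet> d' \<noteq> 0" "sign_pattern D z = sign_pattern D x"
    using sign_pattern_convex_comb[OF x y same] by (simp_all add: z_def)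
  have "z \<bullet> d = (1 - t) * (x \<bullet> d) + t * (y \<bullet> d)"
    by (simp add: z_def inner_add_left)
  also have "\<dots> = 0"
    using assms(4,5) by (simp add: t_def field_simps)
  finally have "z \<bullet> d = 0" .
  moreover have "d \<noteq> 0" using assms(4) by auto
  ultimately obtain c where zc: "z = c *\<^sub>R rot90 d"
    using orthogonal_eq_scaleR_rot90 by blast
  consider "0 < c" | "c < 0" | "c = 0" by linarith
  then show ?thesis
  proof cases
    case 1
    have "sign_pattern D x = sign_pattern D (rot90 d)"
      using z(2) unfolding zc sign_pattern_scaleR_pos[OF 1] by simp
    then show ?thesis by simp
  next
    case 2
    then have "z = (- c) *\<^sub>R (- rot90 d)" "0 < - c" using zc by simp_all
    then have "sign_pattern D x = sign_pattern D (- rot90 d)"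
      using z(2) sign_pattern_scaleR_pos by metis
    then show ?thesis by simp
  next
    case 3
    then have "D = {}" using z(1) zc by fastforce
    then show ?thesis by simp
  qed
qed

lemma card_sign_patterns_insert:
  fixes d :: point
  assumes "finite D" "d \<notin> D"
  shows "card (sign_patterns (insert d D))
           \<le> card (sign_patterns D) + card {sign_pattern D (rot90 d), sign_pattern D (- rot90 d)}"
proof -
  let ?P = "sign_patterns (insert d D)"
  define A where "A = {P \<in> ?P. d \<in> P}"
  define B where "B = {P \<in> ?P. d \<notin> P}"
  define res where "res P = P - {d}" for P :: "point set"
  have res_sign_pattern: "res (sign_pattern (insert d D) x) = sign_pattern D x" for x
    using assms(2) by (auto simp: res_def sign_pattern_def)
  have fin: "finite A" "finite B"
    using finite_sign_patterns[of "insert d D"] assms(1) by (simp_all add: A_def B_def)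
  have inj: "inj_on res A" "inj_on res B"
    by (rule inj_on_inverseI[of _ "insert d"], force simp: A_def res_def)
       (rule inj_on_inverseI[of _ id], force simp: B_def res_def)
  have "?P = A \<union> B" "A \<inter> B = {}" unfolding A_def B_def by blast+
  then have "card ?P = card A + card B" using card_Un_disjoint[OF fin] by simp
  also have "\<dots> = card (res ` A) + card (res ` B)" using inj by (simp add: card_image)
  also have "\<dots> = card (res ` A \<union> res ` B) + card (res ` A \<inter> res ` B)"
    by (rule card_Un_Int) (use fin in simp_all)
  also have "\<dots> \<le> card (sign_patterns D) + card {sign_pattern D (rot90 d), sign_pattern D (- rot90 d)}"
  proof (intro add_mono card_mono)
    show "res ` A \<union> res ` B \<subseteq> sign_patterns D"
      by (auto simp: A_def B_def sign_patterns_def res_sign_pattern)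
    show "res ` A \<inter> res ` B \<subseteq> {sign_pattern D (rot90 d), sign_pattern D (- rot90 d)}"
    proof
      fix P assume P: "P \<in> res ` A \<inter> res ` B"
      obtain x where x: "\<forall>d'\<in>insert d D. x \<bullet> d' \<noteq> 0" "d \<in> sign_pattern (insert d D) x"
          "P = sign_pattern D x"
        using P by (force simp: A_def sign_patterns_def res_sign_pattern)
      obtain y where y: "\<forall>d'\<in>insert d D. y \<bullet> d' \<noteq> 0" "d \<notin> sign_pattern (insert d D) y"
          "P = sign_pattern D y"
        using P by (force simp: B_def sign_patterns_def res_sign_pattern)
      have "0 < x \<bullet> d" using x(2) by (simp add: sign_pattern_def)
      moreover have "y \<bullet> d < 0" using y(1,2) by (auto simp: sign_pattern_def)
      ultimately show "P \<in> {sign_pattern D (rot90 d), sign_pattern D (- rot90 d)}"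
        using sign_pattern_across_line[of D x y d] x y by simp
    qed
  qed (use finite_sign_patterns assms(1) in simp_all)
  finally show ?thesis .
qed

lemma card_sign_patterns:
  fixes D :: "point set"
  assumes "finite D"
  shows "card (sign_patterns D) \<le> max 1 (2 * card D)"
  using assms
proof (induction D rule: finite_induct)
  case empty
  have "sign_patterns ({} :: point set) = {{}}" by (simp add: sign_patterns_def)
  then show ?case by simp
next
  case (insert d D)
  let ?new = "{sign_pattern D (rot90 d), sign_pattern D (- rot90 d)}"
  have step: "card (sign_patterns (insert d D)) \<le> card (sign_patterns D) + card ?new"
    using card_sign_patterns_insert[OF insert(1,2)] .
  show ?case
  proof (cases "D = {}")
    case True
    then have "card ?new = 1" by simp
    then show ?thesis using step insert.IH True by simp
  next
    case False
    have "card ?new \<le> 2" by (simp add: card_insert_le_m1)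
    moreover have "0 < card D" using insert(1) False by (simp add: card_gt_0_iff)
    ultimately show ?thesis using step insert.IH insert(1,2) by (simp add: max_def)
  qed
qed

lemma geom_graph_edge:
  assumes "geom_graph S E" "{v, w} \<in> E"
  shows "v \<in> S" "w \<in> S" "v \<noteq> w"
proof -
  have "{v, w} \<subseteq> S" "card {v, w} = 2" using assms unfolding geom_graph_def by blast+
  then show "v \<in> S" "w \<in> S" "v \<noteq> w" by auto
qed

lemma degree_eq_card_neighbours:
  assumes "geom_graph S E"
  shows "degree E v = card {w. {v, w} \<in> E}"
proof -
  have "{e \<in> E. v \<in> e} = (\<lambda>w. {v, w}) ` {w. {v, w} \<in> E}"
  proof (intro equalityI subsetI)
    fix e assume e: "e \<in> {e \<in> E. v \<in> e}"
    then have "card e = 2" using assms unfolding geom_graph_def by blast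
    then obtain a b where "e = {a, b}" by (auto simp: card_2_iff)
    then have "e = {v, b} \<or> e = {v, a}" using e by auto
    then show "e \<in> (\<lambda>w. {v, w}) ` {w. {v, w} \<in> E}" using e by auto
  qed auto
  moreover have "inj_on (\<lambda>w. {v, w}) {w. {v, w} \<in> E}"
    using geom_graph_edge[OF assms] by (auto simp: inj_on_def doubleton_eq_iff)
  ultimately show ?thesis unfolding degree_def by (simp add: card_image)
qed

lemma graph_path_two_edges:
  assumes "geom_graph S E" "{u, v} \<in> E" "{v, w} \<in> E" "u \<noteq> w"
  shows "graph_path S E [u, v, w] u w"
  unfolding graph_path_def
proof (intro conjI allI impI)
  fix i assume "Suc i < length [u, v, w]"
  then have "i = 0 \<or> i = 1" by auto
  then show "{[u, v, w] ! i, [u, v, w] ! Suc i} \<in> E" using assms(2,3) by auto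
qed (use geom_graph_edge[OF assms(1,2)] geom_graph_edge[OF assms(1,3)] assms(4) in auto)

lemma D_monotone_tree_sign_pattern_inj:
  assumes "geom_graph S E" "D_monotone_tree D S E" "{v, w1} \<in> E" "{v, w2} \<in> E"
    and "sign_pattern D (w1 - v) = sign_pattern D (w2 - v)"
  shows "w1 = w2"
proof (rule ccontr)
  assume "w1 \<noteq> w2"
  have path: "graph_path S E [w1, v, w2] w1 w2"
    using graph_path_two_edges[OF assms(1) _ assms(4) \<open>w1 \<noteq> w2\<close>] assms(3)
    by (simp add: insert_commute)
  have "w1 \<in> S" "w2 \<in> S" using geom_graph_edge[OF assms(1)] assms(3,4) by blast+
  then obtain d where "d \<in> D" "\<forall>ps. graph_path S E ps w1 w2 \<longrightarrow> d_monotone d ps"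
    using assms(2) unfolding D_monotone_tree_def by blast
  then have "d \<in> D" "d_monotone d [w1, v, w2]" using path by auto
  then have "w1 \<bullet> d < v \<bullet> d \<and> v \<bullet> d < w2 \<bullet> d \<or> w2 \<bullet> d < v \<bullet> d \<and> v \<bullet> d < w1 \<bullet> d"
    unfolding d_monotone_def by auto
  then have "(d \<in> sign_pattern D (w1 - v)) \<noteq> (d \<in> sign_pattern D (w2 - v))"
    using \<open>d \<in> D\<close> by (auto simp: sign_pattern_def inner_diff_left)
  then show False using assms(5) by simp
qed

lemma sign_pattern_edge_mem_sign_patterns:
  assumes "geom_graph S E" "D_general_position D S" "{v, w} \<in> E"
  shows "sign_pattern D (w - v) \<in> sign_patterns D"
proof -
  have "\<forall>d\<in>D. (w - v) \<bullet> d \<noteq> 0"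
    using assms(2) geom_graph_edge[OF assms(1,3)]
    unfolding D_general_position_def d_general_position_def by (simp add: inner_diff_left)
  then show ?thesis by (auto simp: sign_patterns_def)
qed

lemma degree_le_card_sign_patterns:
  assumes "finite D" "geom_graph S E" "D_general_position D S" "D_monotone_tree D S E"
  shows "degree E v \<le> card (sign_patterns D)"
proof -
  have "inj_on (\<lambda>w. sign_pattern D (w - v)) {w. {v, w} \<in> E}"
    using D_monotone_tree_sign_pattern_inj[OF assms(2,4)] unfolding inj_on_def by blast
  moreover have "(\<lambda>w. sign_pattern D (w - v)) ` {w. {v, w} \<in> E} \<subseteq> sign_patterns D"
    using sign_pattern_edge_mem_sign_patterns[OF assms(2,3)] by blast
  ultimately have "card {w. {v, w} \<in> E} \<le> card (sign_patterns D)"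
    using finite_sign_patterns[OF assms(1)] by (rule card_inj_on_le)
  then show ?thesis by (simp add: degree_eq_card_neighbours[OF assms(2)])
qed

theorem lemma3:
  fixes S D :: "(real ^ 2) set" and E :: "(real ^ 2) set set" and k :: nat
  assumes "finite S"
    and "finite D" and "card D = k"
    and "\<forall>d\<in>D. direction d"
    and "pairwise_non_opposite D"
    and "D_general_position D S"
    and "geom_spanning_tree S E"
    and "D_monotone_tree D S E"
  shows "\<forall>v\<in>S. degree E v \<le> 2 * k"
proof
  fix v assume "v \<in> S"
  have "D \<noteq> {}" using assms(8) \<open>v \<in> S\<close> unfolding D_monotone_tree_def by blast
  then have "0 < k" using assms(2,3) by (metis card_gt_0_iff)
  have "geom_graph S E" using assms(7) by (simp add: geom_spanning_tree_def)
  then have "degree E v \<le> card (sign_patterns D)"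
    using degree_le_card_sign_patterns assms(2,6,8) by blast
  also have "\<dots> \<le> 2 * k" using card_sign_patterns[OF assms(2)] assms(3) \<open>0 < k\<close> by simp
  finally show "degree E v \<le> 2 * k" .
qed

end
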